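(* For each infinite cardinal $\kappa$ there is a crowded (i.e. without isolated points) regular space of size $2^\kappa$ which has a $\kappa$-deep $\pi$-base.
   Context: A $\pi$-base $\mathcal{U}$ of a space is $\kappa$-deep if for every decreasing sequence $\{U_\alpha\}_{\alpha<\kappa}\subseteq\mathcal{U}$ the set $\bigcap_{\alpha<\kappa}U_\alpha$ has nonempty interior. *)

theory Defs
  imports "HOL-Analysis.Analysis" "HOL-Library.Equipollence"
begin

definition crowded :: "'a topology \<Rightarrow> bool" where
  "crowded X \<longleftrightarrow> (\<forall>x\<in>topspace X. \<not> openin X {x})"

definition pi_base :: "'a topology \<Rightarrow> 'a set set \<Rightarrow> bool" where
  "pi_base X \<U> \<longleftrightarrow> (\<forall>U\<in>\<U>. openin X U \<and> U \<noteq> {}) \<and>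
     (\<forall>V. openin X V \<and> V \<noteq> {} \<longrightarrow> (\<exists>U\<in>\<U>. U \<subseteq> V))"

text \<open>kappa-deep pi-base, where the cardinal kappa is given as a cardinal well-order r
  (an initial ordinal); the indices alpha < kappa range over Field r ordered by r.\<close>
definition deep_pi_base :: "('k \<times> 'k) set \<Rightarrow> 'a topology \<Rightarrow> 'a set set \<Rightarrow> bool" where
  "deep_pi_base r X \<U> \<longleftrightarrow> pi_base X \<U> \<and>
     (\<forall>U :: 'k \<Rightarrow> 'a set.
        (\<forall>\<alpha>\<in>Field r. U \<alpha> \<in> \<U>) \<and> (\<forall>\<alpha> \<beta>. (\<alpha>, \<beta>) \<in> r \<longrightarrow> U \<beta> \<subseteq> U \<alpha>)
        \<longrightarrow> X interior_of (\<Inter>\<alpha>\<in>Field r. U \<alpha>) \<noteq> {})"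

end

theory Submission
  imports Defs
begin

text \<open>Let \<open>F\<close> have cardinality \<open>\<kappa>\<close> and let \<open>D = Pow F\<close>, so \<open>|D| = 2\<^sup>\<kappa>\<close>. The points of the space are
  the subsets of \<open>D\<close> of size at most \<open>\<kappa>\<close> (there are \<open>(2\<^sup>\<kappa>)\<^sup>\<kappa> = 2\<^sup>\<kappa>\<close> of them), topologised as a
  subspace of the \<open>\<kappa>\<^sup>+\<close>-box product \<open>2\<^sup>D\<close>: basic open sets prescribe membership for at most
  \<open>\<kappa>\<close> elements of \<open>D\<close>. These basic sets are clopen, so the space is regular; since \<open>\<kappa> < |D|\<close>
  some element of \<open>D\<close> is unconstrained and can be flipped, so the space is crowded. A
  decreasing \<open>\<kappa>\<close>-chain of basic sets consists of pairwise compatible prescriptions on at most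
  \<open>\<kappa> \<cdot> \<kappa> = \<kappa>\<close> elements of \<open>D\<close>; the union of these prescriptions is again a point, and the basic set
  it determines lies inside the intersection of the chain.\<close>

unbundle cardinal_syntax

lemma UN_lepoll_infinite:
  assumes "infinite F" "I \<lesssim> F" "\<And>i. i \<in> I \<Longrightarrow> A i \<lesssim> F"
  shows "(\<Union>i\<in>I. A i) \<lesssim> F"
proof -
  have "|\<Union>i\<in>I. A i| \<le>o |F|"
    using assms card_of_UNION_ordLeq_infinite[of F I A] card_of_ordLeq by (metis lepoll_def)
  then show ?thesis using card_of_ordLeq lepoll_def by metis
qed

lemma Un_lepoll_infinite:
  assumes "infinite F" "A \<lesssim> F" "B \<lesssim> F"
  shows "A \<union> B \<lesssim> F"
proof -
  have "A \<union> B = (\<Union>i\<in>{True,False}. if i then A else B)" by auto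
  also have "\<dots> \<lesssim> F"
    using assms finite_lepoll_infinite[OF assms(1), of "{True,False}"]
    by (intro UN_lepoll_infinite) auto
  finally show ?thesis .
qed

lemma insert_lepoll_infinite: "infinite F \<Longrightarrow> A \<lesssim> F \<Longrightarrow> insert a A \<lesssim> F"
  using Un_lepoll_infinite[of F "{a}" A] finite_lepoll_infinite[of F "{a}"] by simp

lemma Pow_lepoll_mono: "A \<lesssim> B \<Longrightarrow> Pow A \<lesssim> Pow B"
  unfolding lepoll_def by (metis image_Pow_mono inj_on_image_Pow)

lemma Pow_Times_self_lepoll:
  assumes "infinite F" shows "Pow (F \<times> F) \<lesssim> Pow F"
proof -
  have "|F \<times> F| \<le>o |F|"
    using card_of_Times_same_infinite[OF assms] ordIso_iff_ordLeq by blast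
  then show ?thesis by (intro Pow_lepoll_mono) (simp add: card_of_ordLeq lepoll_def)
qed

text \<open>Requiring \<open>{} \<in> y\<close> makes every family nonempty, hence an image of \<open>F\<close>; the element \<open>{}\<close>
  is never flipped below.\<close>
definition small_families :: "'k set \<Rightarrow> 'k set set set" where
  "small_families F = {y. y \<subseteq> Pow F \<and> y \<lesssim> F \<and> {} \<in> y}"

lemma Pow_lepoll_small_families:
  assumes "infinite F"
  shows "Pow F \<lesssim> small_families F"
  unfolding lepoll_def
proof (intro exI conjI)
  show "inj_on (\<lambda>A. {{}, A}) (Pow F)"
    by (auto simp: inj_on_def doubleton_eq_iff)
  show "(\<lambda>A. {{}, A}) ` Pow F \<subseteq> small_families F"
    using finite_lepoll_infinite[OF assms, of "{{}, _}"] by (auto simp: small_families_def)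
qed

lemma small_family_enumeration:
  assumes "y \<in> small_families F"
  obtains g where "g ` F = y"
proof -
  from assms have y: "y \<lesssim> F" "{} \<in> y" by (auto simp: small_families_def)
  then obtain g where g: "y \<subseteq> g ` F" unfolding lepoll_iff by blast
  have "(\<lambda>\<xi>. if g \<xi> \<in> y then g \<xi> else {}) ` F = y"
    using g y(2) by (auto simp: image_iff)
  then show thesis by (rule that)
qed

text \<open>A family is coded by the graph of an enumeration of it, a subset of \<open>F \<times> F\<close>.\<close>
lemma small_families_lepoll_Pow_Times:
  "small_families F \<lesssim> Pow (F \<times> F)"
proof -
  obtain G where G: "\<And>y. y \<in> small_families F \<Longrightarrow> G y ` F = y"
    using small_family_enumeration by metis
  define graph where "graph y = {(\<xi>, a). \<xi> \<in> F \<and> a \<in> G y \<xi>}" for y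
  have G_sub: "G y \<xi> \<subseteq> F" if "y \<in> small_families F" "\<xi> \<in> F" for y \<xi>
    using G[OF that(1)] that by (auto simp: small_families_def)
  have "inj_on graph (small_families F)"
  proof (rule inj_onI)
    fix y1 y2 assume y: "y1 \<in> small_families F" "y2 \<in> small_families F" "graph y1 = graph y2"
    have "G y1 \<xi> = G y2 \<xi>" if "\<xi> \<in> F" for \<xi>
      using y(3) G_sub[OF y(1) that] G_sub[OF y(2) that] that
      unfolding graph_def by (auto simp: set_eq_iff)
    then show "y1 = y2" using G[OF y(1)] G[OF y(2)] by (metis image_cong)
  qed
  moreover have "graph ` small_families F \<subseteq> Pow (F \<times> F)"
    using G_sub by (auto simp: graph_def)
  ultimately show ?thesis unfolding lepoll_def by blast
qed

lemma small_families_eqpoll_Pow: "infinite F \<Longrightarrow> small_families F \<approx> Pow F"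
  by (meson Pow_lepoll_small_families Pow_Times_self_lepoll lepoll_antisym lepoll_trans
        small_families_lepoll_Pow_Times)

lemma small_families_flip:
  assumes F: "infinite F" and y: "y \<in> small_families F" and T: "T \<lesssim> F"
  obtains z where "z \<in> small_families F" "z \<noteq> y" "z \<inter> T = y \<inter> T"
proof -
  have "\<not> Pow F \<subseteq> insert {} T"
  proof
    assume "Pow F \<subseteq> insert {} T"
    then have "Pow F \<lesssim> F"
      using lepoll_trans[OF subset_imp_lepoll insert_lepoll_infinite[OF F T]] by blast
    then show False using lesspoll_trans2[OF lesspoll_Pow_self, of F F] by simp
  qed
  then obtain i where i: "i \<subseteq> F" "i \<notin> T" "i \<noteq> {}" by blast
  define z where "z = (if i \<in> y then y - {i} else insert i y)"
  have "insert i y \<lesssim> F"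
    using y by (intro insert_lepoll_infinite[OF F]) (simp add: small_families_def)
  then have "z \<lesssim> F"
    by (rule lepoll_trans[OF subset_imp_lepoll, rotated]) (auto simp: z_def)
  then have "z \<in> small_families F" using y i by (auto simp: small_families_def z_def)
  moreover have "z \<noteq> y" "z \<inter> T = y \<inter> T" using i by (auto simp: z_def)
  ultimately show thesis by (rule that)
qed

lemma small_families_amalgamation:
  assumes F: "infinite F" and I: "I \<lesssim> F"
    and y: "\<And>i. i \<in> I \<Longrightarrow> y i \<in> small_families F" and T: "\<And>i. i \<in> I \<Longrightarrow> T i \<lesssim> F"
    and compatible: "\<And>i j. i \<in> I \<Longrightarrow> j \<in> I \<Longrightarrow> y i \<inter> (T i \<inter> T j) = y j \<inter> (T i \<inter> T j)"
  obtains z where "z \<in> small_families F" "\<And>i. i \<in> I \<Longrightarrow> z \<inter> T i = y i \<inter> T i"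
proof
  define z where "z = insert {} (\<Union>i\<in>I. y i \<inter> T i)"
  have "z \<subseteq> insert {} (\<Union>i\<in>I. T i)" by (auto simp: z_def)
  moreover have "insert {} (\<Union>i\<in>I. T i) \<lesssim> F"
    using F I T by (intro insert_lepoll_infinite UN_lepoll_infinite)
  ultimately have "z \<lesssim> F" using subset_imp_lepoll lepoll_trans by blast
  then show "z \<in> small_families F" using y by (auto simp: small_families_def z_def)
  show "z \<inter> T i = y i \<inter> T i" if "i \<in> I" for i
    using that y[OF that] compatible[OF that] by (auto simp: z_def small_families_def)
qed

text \<open>The topology on \<open>A\<close> induced by a coding \<open>c\<close> of its points as subsets of some \<open>D\<close> from
  the box topology on \<open>2\<^sup>D\<close> whose basic open sets fix membership of at most \<open>|F|\<close> elements of \<open>D\<close>;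
  \<open>agree_nhd A c T p\<close> is the basic neighbourhood of \<open>p\<close> fixing the elements of \<open>T\<close>.\<close>
definition agree_nhd :: "'a set \<Rightarrow> ('a \<Rightarrow> 'b set) \<Rightarrow> 'b set \<Rightarrow> 'a \<Rightarrow> 'a set" where
  "agree_nhd A c T p = {q \<in> A. c q \<inter> T = c p \<inter> T}"

definition small_box_open :: "'k set \<Rightarrow> 'a set \<Rightarrow> ('a \<Rightarrow> 'b set) \<Rightarrow> 'a set \<Rightarrow> bool" where
  "small_box_open F A c U \<longleftrightarrow> U \<subseteq> A \<and> (\<forall>p\<in>U. \<exists>T. T \<lesssim> F \<and> agree_nhd A c T p \<subseteq> U)"

definition small_box_topology :: "'k set \<Rightarrow> 'a set \<Rightarrow> ('a \<Rightarrow> 'b set) \<Rightarrow> 'a topology" where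
  "small_box_topology F A c = topology (small_box_open F A c)"

lemma agree_nhd_self: "p \<in> A \<Longrightarrow> p \<in> agree_nhd A c T p"
  by (simp add: agree_nhd_def)

lemma agree_nhd_antimono: "T' \<subseteq> T \<Longrightarrow> agree_nhd A c T p \<subseteq> agree_nhd A c T' p"
  unfolding agree_nhd_def by blast

lemma agree_nhd_eq: "q \<in> agree_nhd A c T p \<Longrightarrow> agree_nhd A c T q = agree_nhd A c T p"
  by (simp add: agree_nhd_def)

lemma agree_nhd_subsetD:
  "p' \<in> A \<Longrightarrow> agree_nhd A c T' p' \<subseteq> agree_nhd A c T p \<Longrightarrow> c p' \<inter> T = c p \<inter> T"
  using agree_nhd_self by (fastforce simp: agree_nhd_def)

lemma istopology_small_box_open:
  assumes F: "infinite F"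
  shows "istopology (small_box_open F A c)"
  unfolding istopology_def
proof (intro conjI allI impI)
  fix U V assume U: "small_box_open F A c U" and V: "small_box_open F A c V"
  show "small_box_open F A c (U \<inter> V)"
    unfolding small_box_open_def
  proof (intro conjI ballI)
    show "U \<inter> V \<subseteq> A" using U by (auto simp: small_box_open_def)
    fix p assume p: "p \<in> U \<inter> V"
    obtain TU where TU: "TU \<lesssim> F" "agree_nhd A c TU p \<subseteq> U"
      using U IntD1[OF p] unfolding small_box_open_def by blast
    obtain TV where TV: "TV \<lesssim> F" "agree_nhd A c TV p \<subseteq> V"
      using V IntD2[OF p] unfolding small_box_open_def by blast
    have "agree_nhd A c (TU \<union> TV) p \<subseteq> agree_nhd A c TU p \<inter> agree_nhd A c TV p"
      by (simp add: agree_nhd_antimono)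
    then have "agree_nhd A c (TU \<union> TV) p \<subseteq> U \<inter> V" using TU(2) TV(2) by blast
    then show "\<exists>T. T \<lesssim> F \<and> agree_nhd A c T p \<subseteq> U \<inter> V"
      using Un_lepoll_infinite[OF F TU(1) TV(1)] by blast
  qed
next
  fix K assume "\<forall>U\<in>K. small_box_open F A c U"
  then show "small_box_open F A c (\<Union>K)"
    unfolding small_box_open_def by (meson Union_iff Union_least Union_upper subset_trans)
qed

lemma openin_small_box_topology:
  "infinite F \<Longrightarrow> openin (small_box_topology F A c) = small_box_open F A c"
  by (simp add: small_box_topology_def istopology_small_box_open)

lemma topspace_small_box_topology:
  assumes "infinite F" shows "topspace (small_box_topology F A c) = A"
proof -
  have "small_box_open F A c A" by (auto simp: small_box_open_def agree_nhd_def)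
  then show ?thesis
    using assms by (auto simp: topspace_def openin_small_box_topology small_box_open_def)
qed

lemma openin_agree_nhd:
  assumes "infinite F" "T \<lesssim> F"
  shows "openin (small_box_topology F A c) (agree_nhd A c T p)"
  unfolding openin_small_box_topology[OF assms(1)] small_box_open_def
proof (intro conjI ballI)
  show "agree_nhd A c T p \<subseteq> A" by (auto simp: agree_nhd_def)
  fix q assume "q \<in> agree_nhd A c T p"
  then have "agree_nhd A c T q = agree_nhd A c T p" by (rule agree_nhd_eq)
  then show "\<exists>T'. T' \<lesssim> F \<and> agree_nhd A c T' q \<subseteq> agree_nhd A c T p"
    using assms(2) by (intro exI[of _ T]) simp
qed

text \<open>Basic neighbourhoods are classes of an equivalence relation, so their complements are open.\<close>
lemma closedin_agree_nhd:
  assumes F: "infinite F" and T: "T \<lesssim> F"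
  shows "closedin (small_box_topology F A c) (agree_nhd A c T p)"
proof -
  have "small_box_open F A c (A - agree_nhd A c T p)"
    unfolding small_box_open_def
  proof (intro conjI ballI)
    fix q assume "q \<in> A - agree_nhd A c T p"
    then have "agree_nhd A c T q \<subseteq> A - agree_nhd A c T p"
      using agree_nhd_eq agree_nhd_self by (fastforce simp: agree_nhd_def)
    then show "\<exists>T'. T' \<lesssim> F \<and> agree_nhd A c T' q \<subseteq> A - agree_nhd A c T p"
      using T by blast
  qed auto
  then show ?thesis
    using F by (auto simp: closedin_def topspace_small_box_topology openin_small_box_topology
        agree_nhd_def)
qed

lemma t1_space_small_box_topology:
  assumes F: "infinite F" and inj: "inj_on c A"
  shows "t1_space (small_box_topology F A c)"
  unfolding t1_space_def topspace_small_box_topology[OF F]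
proof (intro ballI impI)
  fix p q assume pq: "p \<in> A" "q \<in> A" "p \<noteq> q"
  then obtain i where "(i \<in> c p) \<noteq> (i \<in> c q)" using inj by (meson inj_onD subsetI subset_antisym)
  then have "q \<notin> agree_nhd A c {i} p" by (auto simp: agree_nhd_def)
  moreover have "openin (small_box_topology F A c) (agree_nhd A c {i} p)"
    using F by (intro openin_agree_nhd finite_lepoll_infinite) auto
  ultimately show "\<exists>U. openin (small_box_topology F A c) U \<and> p \<in> U \<and> q \<notin> U"
    using agree_nhd_self[OF pq(1)] by blast
qed

lemma regular_space_small_box_topology:
  assumes F: "infinite F"
  shows "regular_space (small_box_topology F A c)"
  unfolding regular_space_def
proof (intro allI impI)
  let ?X = "small_box_topology F A c"
  fix C p assume "closedin ?X C \<and> p \<in> topspace ?X - C"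
  then have C: "C \<subseteq> A" "small_box_open F A c (A - C)" and p: "p \<in> A - C"
    using F by (auto simp: closedin_def topspace_small_box_topology openin_small_box_topology)
  then obtain T where T: "T \<lesssim> F" "agree_nhd A c T p \<subseteq> A - C"
    unfolding small_box_open_def by meson
  have "openin ?X (A - agree_nhd A c T p)"
    using closedin_agree_nhd[OF F T(1), of A c p]
    by (simp add: closedin_def topspace_small_box_topology[OF F])
  moreover have "C \<subseteq> A - agree_nhd A c T p" "disjnt (agree_nhd A c T p) (A - agree_nhd A c T p)"
    using C(1) T(2) by (auto simp: disjnt_def)
  moreover have "openin ?X (agree_nhd A c T p)" "p \<in> agree_nhd A c T p"
    using openin_agree_nhd[OF F T(1)] agree_nhd_self p by auto
  ultimately show "\<exists>U V. openin ?X U \<and> openin ?X V \<and> p \<in> U \<and> C \<subseteq> V \<and> disjnt U V"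
    by (intro exI conjI)
qed

lemma crowded_small_box_topology:
  assumes F: "infinite F"
    and flip: "\<And>y T. y \<in> c ` A \<Longrightarrow> T \<lesssim> F \<Longrightarrow> \<exists>z\<in>c ` A. z \<noteq> y \<and> z \<inter> T = y \<inter> T"
  shows "crowded (small_box_topology F A c)"
  unfolding crowded_def topspace_small_box_topology[OF F]
proof (intro ballI notI)
  fix p assume p: "p \<in> A" and "openin (small_box_topology F A c) {p}"
  then obtain T where T: "T \<lesssim> F" "agree_nhd A c T p \<subseteq> {p}"
    using F by (auto simp: openin_small_box_topology small_box_open_def)
  obtain q where "q \<in> A" "c q \<noteq> c p" "c q \<inter> T = c p \<inter> T"
    using flip[OF imageI[OF p] T(1)] by blast
  then show False using T(2) by (auto simp: agree_nhd_def)
qed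

lemma pi_base_agree_nhds:
  assumes F: "infinite F"
  shows "pi_base (small_box_topology F A c) {agree_nhd A c T p | T p. T \<lesssim> F \<and> p \<in> A}"
  unfolding pi_base_def
proof (rule conjI; intro ballI allI impI)
  fix U assume "U \<in> {agree_nhd A c T p | T p. T \<lesssim> F \<and> p \<in> A}"
  then obtain T p where "T \<lesssim> F" "p \<in> A" "U = agree_nhd A c T p" by blast
  then show "openin (small_box_topology F A c) U \<and> U \<noteq> {}"
    using openin_agree_nhd[OF F] agree_nhd_self by fastforce
next
  fix V assume V: "openin (small_box_topology F A c) V \<and> V \<noteq> {}"
  then obtain p where p: "p \<in> V" by blast
  with V obtain T where "T \<lesssim> F" "agree_nhd A c T p \<subseteq> V"
    using F unfolding openin_small_box_topology[OF F] small_box_open_def by meson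
  moreover have "p \<in> A" using V p F by (auto simp: openin_small_box_topology small_box_open_def)
  ultimately show "\<exists>U\<in>{agree_nhd A c T p | T p. T \<lesssim> F \<and> p \<in> A}. U \<subseteq> V"
    by (intro bexI[of _ "agree_nhd A c T p"]) auto
qed

text \<open>Along a chain, each basic set lies inside the earlier ones, so the prescriptions
  \<open>c (p \<alpha>) \<inter> T \<alpha>\<close> are pairwise compatible; their amalgamation \<open>q\<close> has a basic neighbourhood
  fixing all \<open>T \<alpha>\<close> at once, which needs \<open>|Field r| \<le> |F|\<close>.\<close>
lemma deep_pi_base_small_box_topology:
  fixes r :: "('i \<times> 'i) set"
  assumes F: "infinite F" and r: "Field r \<lesssim> F"
    and total: "\<And>\<alpha> \<beta>. \<alpha> \<in> Field r \<Longrightarrow> \<beta> \<in> Field r \<Longrightarrow> (\<alpha>, \<beta>) \<in> r \<or> (\<beta>, \<alpha>) \<in> r"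
    and amalgamation: "\<And>y T. (\<And>\<alpha>. \<alpha> \<in> Field r \<Longrightarrow> y \<alpha> \<in> c ` A \<and> T \<alpha> \<lesssim> F) \<Longrightarrow>
      (\<And>\<alpha> \<beta>. \<alpha> \<in> Field r \<Longrightarrow> \<beta> \<in> Field r \<Longrightarrow> y \<alpha> \<inter> (T \<alpha> \<inter> T \<beta>) = y \<beta> \<inter> (T \<alpha> \<inter> T \<beta>)) \<Longrightarrow>
      \<exists>q\<in>A. \<forall>\<alpha>\<in>Field r. c q \<inter> T \<alpha> = y \<alpha> \<inter> T \<alpha>"
  shows "deep_pi_base r (small_box_topology F A c) {agree_nhd A c T p | T p. T \<lesssim> F \<and> p \<in> A}"
  unfolding deep_pi_base_def
proof (intro conjI allI impI pi_base_agree_nhds[OF F])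
  fix U
  assume "(\<forall>\<alpha>\<in>Field r. U \<alpha> \<in> {agree_nhd A c T p | T p. T \<lesssim> F \<and> p \<in> A}) \<and>
    (\<forall>\<alpha> \<beta>. (\<alpha>, \<beta>) \<in> r \<longrightarrow> U \<beta> \<subseteq> U \<alpha>)"
  then have chain: "\<forall>\<alpha>\<in>Field r. \<exists>T p. T \<lesssim> F \<and> p \<in> A \<and> U \<alpha> = agree_nhd A c T p"
    and decreasing: "\<And>\<alpha> \<beta>. (\<alpha>, \<beta>) \<in> r \<Longrightarrow> U \<beta> \<subseteq> U \<alpha>"
    by blast+
  then obtain T p where Tp: "\<And>\<alpha>. \<alpha> \<in> Field r \<Longrightarrow> T \<alpha> \<lesssim> F \<and> p \<alpha> \<in> A \<and> U \<alpha> = agree_nhd A c (T \<alpha>) (p \<alpha>)"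
    by metis
  have compatible: "c (p \<alpha>) \<inter> (T \<alpha> \<inter> T \<beta>) = c (p \<beta>) \<inter> (T \<alpha> \<inter> T \<beta>)"
    if "\<alpha> \<in> Field r" "\<beta> \<in> Field r" for \<alpha> \<beta>
  proof -
    have "c (p \<beta>) \<inter> T \<alpha> = c (p \<alpha>) \<inter> T \<alpha> \<or> c (p \<alpha>) \<inter> T \<beta> = c (p \<beta>) \<inter> T \<beta>"
      using total[OF that] decreasing Tp[OF that(1)] Tp[OF that(2)] agree_nhd_subsetD
      by metis
    then show ?thesis by blast
  qed
  obtain q where q: "q \<in> A" "\<And>\<alpha>. \<alpha> \<in> Field r \<Longrightarrow> c q \<inter> T \<alpha> = c (p \<alpha>) \<inter> T \<alpha>"
    using amalgamation[of "\<lambda>\<alpha>. c (p \<alpha>)" T] Tp compatible by blast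
  define T' where "T' = (\<Union>\<alpha>\<in>Field r. T \<alpha>)"
  have T': "T' \<lesssim> F" unfolding T'_def using F r Tp by (intro UN_lepoll_infinite) auto
  have "agree_nhd A c T' q \<subseteq> (\<Inter>\<alpha>\<in>Field r. U \<alpha>)"
  proof (intro subsetI INT_I)
    fix q' \<alpha> assume q': "q' \<in> agree_nhd A c T' q" and \<alpha>: "\<alpha> \<in> Field r"
    have "T \<alpha> \<subseteq> T'" using \<alpha> by (auto simp: T'_def)
    then have "q' \<in> agree_nhd A c (T \<alpha>) q" by (rule subsetD[OF agree_nhd_antimono q'])
    then show "q' \<in> U \<alpha>" using q Tp[OF \<alpha>] \<alpha> by (auto simp: agree_nhd_def)
  qed
  then have "agree_nhd A c T' q \<subseteq> small_box_topology F A c interior_of (\<Inter>\<alpha>\<in>Field r. U \<alpha>)"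
    by (rule interior_of_maximal[OF _ openin_agree_nhd[OF F T']])
  then show "small_box_topology F A c interior_of (\<Inter>\<alpha>\<in>Field r. U \<alpha>) \<noteq> {}"
    using agree_nhd_self[OF q(1)] by blast
qed

lemma crowded_small_box_topology_small_families:
  fixes F :: "'k set" and c :: "'a \<Rightarrow> 'k set set"
  assumes F: "infinite F" and image: "c ` A = small_families F"
  shows "crowded (small_box_topology F A c)"
proof (rule crowded_small_box_topology[OF F])
  fix y T :: "'k set set" assume "y \<in> c ` A" and T: "T \<lesssim> F"
  then have y: "y \<in> small_families F" by (simp add: image)
  obtain z where "z \<in> small_families F" "z \<noteq> y" "z \<inter> T = y \<inter> T"
    by (rule small_families_flip[OF F y T])
  then show "\<exists>z\<in>c ` A. z \<noteq> y \<and> z \<inter> T = y \<inter> T" by (auto simp: image)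
qed

lemma deep_pi_base_small_box_topology_small_families:
  fixes F :: "'k set" and c :: "'a \<Rightarrow> 'k set set" and r :: "('i \<times> 'i) set"
  assumes F: "infinite F" and image: "c ` A = small_families F"
    and r: "Card_order r" "Field r \<lesssim> F"
  shows "deep_pi_base r (small_box_topology F A c) {agree_nhd A c T p | T p. T \<lesssim> F \<and> p \<in> A}"
proof (rule deep_pi_base_small_box_topology[OF F r(2)])
  show "(\<alpha>, \<beta>) \<in> r \<or> (\<beta>, \<alpha>) \<in> r" if "\<alpha> \<in> Field r" "\<beta> \<in> Field r" for \<alpha> \<beta>
    using wo_rel.TOTALS[OF Card_order_wo_rel[OF r(1)]] that by blast
next
  fix y T :: "'i \<Rightarrow> 'k set set"
  assume y: "\<And>\<alpha>. \<alpha> \<in> Field r \<Longrightarrow> y \<alpha> \<in> c ` A \<and> T \<alpha> \<lesssim> F"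
    and compatible: "\<And>\<alpha> \<beta>. \<alpha> \<in> Field r \<Longrightarrow> \<beta> \<in> Field r \<Longrightarrow>
      y \<alpha> \<inter> (T \<alpha> \<inter> T \<beta>) = y \<beta> \<inter> (T \<alpha> \<inter> T \<beta>)"
  have "y \<alpha> \<in> small_families F" "T \<alpha> \<lesssim> F" if "\<alpha> \<in> Field r" for \<alpha>
    using y[OF that] by (simp_all add: image)
  then obtain z where z: "z \<in> small_families F" "\<And>\<alpha>. \<alpha> \<in> Field r \<Longrightarrow> z \<inter> T \<alpha> = y \<alpha> \<inter> T \<alpha>"
    using small_families_amalgamation[OF F r(2), of y T] compatible by blast
  then obtain q where "q \<in> A" "c q = z" by (auto simp flip: image)
  then show "\<exists>q\<in>A. \<forall>\<alpha>\<in>Field r. c q \<inter> T \<alpha> = y \<alpha> \<inter> T \<alpha>" using z(2) by blast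
qed

theorem lemma4p1:
  fixes r :: "('k \<times> 'k) set"
  assumes "Card_order r" and "infinite (Field r)"
  shows "\<exists>X :: 'k set topology. topspace X \<approx> Pow (Field r) \<and> crowded X \<and>
           t1_space X \<and> regular_space X \<and> (\<exists>\<U>. deep_pi_base r X \<U>)"
proof -
  let ?F = "Field r"
  obtain c where c: "bij_betw c (Pow ?F) (small_families ?F)"
    using small_families_eqpoll_Pow[OF assms(2)] eqpoll_def eqpoll_sym by metis
  then have image: "c ` Pow ?F = small_families ?F" and inj: "inj_on c (Pow ?F)"
    by (simp_all add: bij_betw_def)
  let ?X = "small_box_topology ?F (Pow ?F) c"
  have "topspace ?X \<approx> Pow ?F" by (simp add: topspace_small_box_topology[OF assms(2)])
  moreover have "crowded ?X" by (rule crowded_small_box_topology_small_families[OF assms(2) image])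
  moreover have "t1_space ?X" by (rule t1_space_small_box_topology[OF assms(2) inj])
  moreover have "regular_space ?X" by (rule regular_space_small_box_topology[OF assms(2)])
  moreover have "deep_pi_base r ?X {agree_nhd (Pow ?F) c T p | T p. T \<lesssim> ?F \<and> p \<in> Pow ?F}"
    by (rule deep_pi_base_small_box_topology_small_families[OF assms(2) image assms(1) lepoll_refl])
  ultimately show ?thesis by blast
qed

end
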